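(* Let $\sigma_A>0$, let $A\in\mathbb R^{m\times d}$ have i.i.d. entries $A_{i,j}\sim\mathcal N(0,\sigma_A^2)$, let $b\in\mathbb R^m$, let $\phi(z)=\max\{z,0\}$ be the ReLU applied coordinatewise, and let $f(x)=\phi(Ax+b)$ for $x\in[0,1]^d$. Define the $\ell_2$ global sensitivity \[ \mathrm{GS}_2(f)=\sup\{\|f(x_1)-f(x_2)\|_2 : x_1,x_2\in[0,1]^d \text{ differ in at most one entry}\}. \] Then for any $\delta\in(0,1)$, \[ \Pr_A\Big[\mathrm{GS}_2(f)\le 2\sigma_A\big(\sqrt{md}+\sqrt{\log(1/\delta)}\big)\Big]\ge1-\delta . \]
   Context: $\|\cdot\|_2$ is the Euclidean norm. The probability is over the random matrix $A$. *)

theory Defs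
  imports "HOL-Probability.Probability"
begin

text \<open>Gaussian N(0, sigma^2) as a measure on the reals (sigma is the standard deviation).\<close>
definition gaussian :: "real \<Rightarrow> real measure" where
  "gaussian \<sigma> = density lborel (normal_density 0 \<sigma>)"

definition gauss_matrix_law :: "real \<Rightarrow> (('m::finite \<times> 'd::finite) \<Rightarrow> real) measure" where
  "gauss_matrix_law \<sigma> = PiM UNIV (\<lambda>_. gaussian \<sigma>)"

definition to_matrix :: "(('m::finite \<times> 'd::finite) \<Rightarrow> real) \<Rightarrow> real^'d^'m" where
  "to_matrix a = (\<chi> i j. a (i, j))"

definition relu_vec :: "real^'m \<Rightarrow> real^'m" where
  "relu_vec z = (\<chi> i. max (z $ i) 0)"

definition relu_layer :: "real^'d^'m \<Rightarrow> real^'m \<Rightarrow> real^'d \<Rightarrow> real^'m" where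
  "relu_layer A b x = relu_vec (A *v x + b)"

definition unit_cube :: "(real^'d::finite) set" where
  "unit_cube = {x. \<forall>j. 0 \<le> x $ j \<and> x $ j \<le> 1}"

definition neighbours :: "real^'d::finite \<Rightarrow> real^'d \<Rightarrow> bool" where
  "neighbours x y \<longleftrightarrow> card {j. x $ j \<noteq> y $ j} \<le> 1"

definition GS2 :: "(real^'d::finite \<Rightarrow> real^'m::finite) \<Rightarrow> real" where
  "GS2 f = Sup {norm (f x1 - f x2) | x1 x2. x1 \<in> unit_cube \<and> x2 \<in> unit_cube \<and> neighbours x1 x2}"

end

theory Submission
  imports Defs
begin

(* ReLU is 1-Lipschitz, so x \<mapsto> relu(A x + b) is Lipschitz with constant the Frobenius norm
   |A|_F, and two neighbouring points of the unit cube are at distance at most 1; hence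
   GS2 <= |A|_F. The exponential moment E exp(|A|_F^2 / (4 sigma^2)) factorises over the
   entries and equals sqrt 2 ^ (m d) <= e^(m d), so Chernoff's inequality gives
   P(|A|_F >= 2 sigma (sqrt (m d) + sqrt t)) <= e^(-t); take t = ln (1 / delta).
   The good event is closed in A (an intersection over pairs of neighbours), hence measurable. *)

lemma relu_vec_dist_le: "norm (relu_vec u - relu_vec v) \<le> norm (u - v)"
  unfolding relu_vec_def
  by (rule norm_le_componentwise_cart) (auto simp: max_def)

(* The norm of real^'n^'m is the Frobenius norm, not the operator norm. *)
lemma norm_matrix_vector_mult_le:
  fixes A :: "real^'n^'m"
  shows "norm (A *v x) \<le> norm A * norm x"
proof -
  have "norm (A *v x) = L2_set (\<lambda>i. \<bar>A$i \<bullet> x\<bar>) UNIV"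
    by (simp add: norm_vec_def matrix_vector_mult_def inner_vec_def)
  also have "\<dots> \<le> L2_set (\<lambda>i. norm (A$i) * norm x) UNIV"
    by (intro L2_set_mono Cauchy_Schwarz_ineq2) auto
  also have "\<dots> = norm A * norm x"
    by (simp add: norm_vec_def L2_set_left_distrib)
  finally show ?thesis .
qed

lemma relu_layer_lipschitz: "lipschitz_on (norm A) S (relu_layer A b)"
proof (rule lipschitz_onI)
  fix x y
  have "dist (relu_layer A b x) (relu_layer A b y) \<le> norm ((A *v x + b) - (A *v y + b))"
    unfolding relu_layer_def dist_norm by (rule relu_vec_dist_le)
  also have "\<dots> \<le> norm A * dist x y"
    by (simp add: dist_norm norm_matrix_vector_mult_le flip: matrix_vector_mult_diff_distrib)
  finally show "dist (relu_layer A b x) (relu_layer A b y) \<le> norm A * dist x y" .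
qed simp

lemma neighbours_unit_cube_dist_le_1:
  assumes "x \<in> unit_cube" "y \<in> unit_cube" "neighbours x y"
  shows "dist x y \<le> 1"
proof -
  let ?S = "{j. x $ j \<noteq> y $ j}"
  have "dist x y = L2_set (\<lambda>j. dist (x$j) (y$j)) ?S"
    unfolding dist_vec_def L2_set_def by (intro arg_cong[where f=sqrt] sum.mono_neutral_right) auto
  also have "\<dots> \<le> L2_set (\<lambda>_. 1) ?S"
  proof (rule L2_set_mono)
    fix j
    have "0 \<le> x$j" "x$j \<le> 1" "0 \<le> y$j" "y$j \<le> 1"
      using assms(1,2) by (auto simp: unit_cube_def)
    then show "dist (x$j) (y$j) \<le> 1"
      by (simp add: dist_real_def abs_le_iff)
  qed simp
  also have "\<dots> \<le> 1"
    using assms(3) by (simp add: L2_set_constant neighbours_def)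
  finally show ?thesis .
qed

lemma lipschitz_on_unit_cube_neighbours_le:
  assumes "lipschitz_on C unit_cube f" "x \<in> unit_cube" "y \<in> unit_cube" "neighbours x y"
  shows "norm (f x - f y) \<le> C"
proof -
  have "norm (f x - f y) \<le> C * dist x y"
    using assms(1-3) by (auto simp: dist_norm dest: lipschitz_onD)
  also have "\<dots> \<le> C"
    using assms lipschitz_on_nonneg neighbours_unit_cube_dist_le_1 by (metis mult_left_le)
  finally show ?thesis .
qed

lemma GS2_le_iff:
  assumes "lipschitz_on C unit_cube f"
  shows "GS2 f \<le> R \<longleftrightarrow>
    (\<forall>x\<in>unit_cube. \<forall>y\<in>unit_cube. neighbours x y \<longrightarrow> norm (f x - f y) \<le> R)"
proof -
  let ?D = "{norm (f x - f y) |x y. x \<in> unit_cube \<and> y \<in> unit_cube \<and> neighbours x y}"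
  have "0 \<in> unit_cube" "neighbours 0 0"
    by (simp_all add: unit_cube_def neighbours_def)
  then have "?D \<noteq> {}"
    by blast
  moreover have "bdd_above ?D"
    using lipschitz_on_unit_cube_neighbours_le[OF assms] by (intro bdd_aboveI) blast
  ultimately show ?thesis
    unfolding GS2_def by (subst cSup_le_iff) blast+
qed

lemma GS2_le_lipschitz_const: "lipschitz_on C unit_cube f \<Longrightarrow> GS2 f \<le> C"
  by (simp add: GS2_le_iff lipschitz_on_unit_cube_neighbours_le)

lemma continuous_on_relu_layer: "continuous_on S (\<lambda>A. relu_layer A b x)"
  unfolding relu_layer_def relu_vec_def matrix_vector_mult_def by (intro continuous_intros)

lemma continuous_on_to_matrix: "continuous_on UNIV to_matrix"
  unfolding to_matrix_def by (intro continuous_intros continuous_on_product_coordinates)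

lemma closed_GS2_relu_layer_le: "closed {a. GS2 (relu_layer (to_matrix a) b) \<le> R}"
proof -
  have "{a. GS2 (relu_layer (to_matrix a) b) \<le> R} =
    (\<Inter>x\<in>unit_cube. \<Inter>y\<in>{y\<in>unit_cube. neighbours x y}.
       {a. norm (relu_layer (to_matrix a) b x - relu_layer (to_matrix a) b y) \<le> R})"
    by (auto simp: GS2_le_iff[OF relu_layer_lipschitz])
  also have "closed \<dots>"
    by (intro closed_INT ballI closed_Collect_le continuous_intros
        continuous_on_compose2[OF continuous_on_relu_layer continuous_on_to_matrix]) auto
  finally show ?thesis .
qed

lemma norm_to_matrix: "norm (to_matrix a) = L2_set a UNIV"
proof -
  have "norm (to_matrix a) = sqrt (\<Sum>i\<in>UNIV. \<Sum>j\<in>UNIV. (a (i, j))^2)"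
    by (simp add: norm_vec_def L2_set_def to_matrix_def sum_nonneg)
  also have "\<dots> = L2_set a UNIV"
    by (simp add: L2_set_def sum.cartesian_product flip: UNIV_Times_UNIV)
  finally show ?thesis .
qed

lemma sets_gaussian [simp, measurable_cong]: "sets (gaussian \<sigma>) = sets borel"
  by (simp add: gaussian_def)

lemma space_gaussian [simp]: "space (gaussian \<sigma>) = UNIV"
  by (simp add: gaussian_def)

lemma prob_space_gaussian: "\<sigma> > 0 \<Longrightarrow> prob_space (gaussian \<sigma>)"
  unfolding gaussian_def by (rule prob_space_normal_density)

lemma nn_integral_gaussian_exp_square:
  assumes "\<sigma> > 0"
  shows "(\<integral>\<^sup>+x. ennreal (exp (x^2 / (4 * \<sigma>^2))) \<partial>gaussian \<sigma>) = ennreal (sqrt 2)"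
proof -
  have density_eq: "normal_density 0 \<sigma> x * exp (x^2 / (4 * \<sigma>^2))
      = sqrt 2 * normal_density 0 (sqrt 2 * \<sigma>) x" for x
  proof -
    have "exp (- ((x - 0)^2) / (2 * \<sigma>^2)) * exp (x^2 / (4 * \<sigma>^2))
        = exp (- ((x - 0)^2) / (2 * (sqrt 2 * \<sigma>)^2))"
      unfolding exp_add[symmetric] using assms by (simp add: power_mult_distrib field_simps)
    moreover have "1 / sqrt (2 * pi * \<sigma>^2) = sqrt 2 * (1 / sqrt (2 * pi * (sqrt 2 * \<sigma>)^2))"
      using assms by (simp add: power_mult_distrib real_sqrt_mult field_simps)
    ultimately show ?thesis
      unfolding normal_density_def by (metis mult.assoc)
  qed
  have "(\<integral>\<^sup>+x. ennreal (exp (x^2 / (4 * \<sigma>^2))) \<partial>gaussian \<sigma>)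
      = (\<integral>\<^sup>+x. ennreal (sqrt 2) * ennreal (normal_density 0 (sqrt 2 * \<sigma>) x) \<partial>lborel)"
    unfolding gaussian_def
    by (subst nn_integral_density) (auto simp flip: ennreal_mult' ennreal_mult simp: density_eq)
  also have "\<dots> = ennreal (sqrt 2) * (\<integral>\<^sup>+x. ennreal (normal_density 0 (sqrt 2 * \<sigma>) x) \<partial>lborel)"
    by (rule nn_integral_cmult) auto
  also have "(\<integral>\<^sup>+x. ennreal (normal_density 0 (sqrt 2 * \<sigma>) x) \<partial>lborel) = 1"
    using assms by (subst nn_integral_eq_integral)
      (auto intro!: integrable_normal_density simp: integral_normal_density)
  finally show ?thesis by simp
qed

lemma nn_integral_gaussian_vector_exp_sum_squares:
  assumes "\<sigma> > 0"
  shows "(\<integral>\<^sup>+a. ennreal (exp ((\<Sum>i\<in>UNIV. (a i)^2) / (4 * \<sigma>^2)))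
           \<partial>PiM (UNIV :: 'i::finite set) (\<lambda>_. gaussian \<sigma>)) = ennreal (sqrt 2 ^ CARD('i))"
proof -
  interpret product_sigma_finite "\<lambda>_::'i. gaussian \<sigma>"
    unfolding product_sigma_finite_def
    using prob_space_gaussian[OF assms] prob_space_imp_sigma_finite by blast
  have "(\<integral>\<^sup>+a. ennreal (exp ((\<Sum>i\<in>UNIV. (a i)^2) / (4 * \<sigma>^2))) \<partial>PiM UNIV (\<lambda>_::'i. gaussian \<sigma>))
      = (\<integral>\<^sup>+a. (\<Prod>i\<in>UNIV. ennreal (exp ((a i)^2 / (4 * \<sigma>^2)))) \<partial>PiM UNIV (\<lambda>_::'i. gaussian \<sigma>))"
    by (intro nn_integral_cong) (simp add: prod_ennreal sum_divide_distrib exp_sum)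
  also have "\<dots> = (\<Prod>i\<in>(UNIV :: 'i set). \<integral>\<^sup>+x. ennreal (exp (x^2 / (4 * \<sigma>^2))) \<partial>gaussian \<sigma>)"
    by (rule product_nn_integral_prod) auto
  also have "\<dots> = ennreal (sqrt 2 ^ CARD('i))"
    by (simp add: nn_integral_gaussian_exp_square[OF assms] ennreal_power)
  finally show ?thesis .
qed

lemma gaussian_vector_L2_set_tail:
  fixes t :: real
  assumes "\<sigma> > 0" and "t \<ge> 0"
  defines "M \<equiv> PiM UNIV (\<lambda>_::'i::finite. gaussian \<sigma>)"
  shows "measure M {a \<in> space M. 2 * \<sigma> * (sqrt CARD('i) + sqrt t) \<le> L2_set a UNIV} \<le> exp (- t)"
proof -
  define n where "n = real CARD('i)"
  define S where "S a = (\<Sum>i\<in>UNIV. (a i)^2)" for a :: "'i \<Rightarrow> real"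
  interpret prob_space M
    unfolding M_def by (intro prob_space_PiM prob_space_gaussian assms)
  have [measurable]: "S \<in> borel_measurable M"
    unfolding M_def S_def by measurable
  have "{a \<in> space M. 2 * \<sigma> * (sqrt n + sqrt t) \<le> L2_set a UNIV}
      \<subseteq> {a \<in> space M. 4 * \<sigma>^2 * (n + t) \<le> S a}"
  proof safe
    fix a :: "'i \<Rightarrow> real"
    assume "2 * \<sigma> * (sqrt n + sqrt t) \<le> L2_set a UNIV"
    have "4 * \<sigma>^2 * (n + t) \<le> 4 * \<sigma>^2 * (n + t + 2 * sqrt n * sqrt t)"
      using assms by (simp add: n_def)
    also have "\<dots> = (2 * \<sigma> * (sqrt n + sqrt t))^2"
      using \<open>t \<ge> 0\<close> by (simp add: n_def power2_eq_square algebra_simps)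
    also have "\<dots> \<le> (L2_set a UNIV)^2"
      using \<open>2 * \<sigma> * (sqrt n + sqrt t) \<le> L2_set a UNIV\<close> assms
      by (intro power_mono) (auto simp: n_def)
    also have "\<dots> = S a"
      by (simp add: L2_set_def S_def sum_nonneg)
    finally show "4 * \<sigma>^2 * (n + t) \<le> S a" .
  qed
  then have "emeasure M {a \<in> space M. 2 * \<sigma> * (sqrt n + sqrt t) \<le> L2_set a UNIV}
      \<le> emeasure M {a \<in> space M. 4 * \<sigma>^2 * (n + t) \<le> S a}"
    by (intro emeasure_mono) measurable
  also have "\<dots> \<le> ennreal (exp (- (1 / (4 * \<sigma>^2)) * (4 * \<sigma>^2 * (n + t))))
      * (\<integral>\<^sup>+a. ennreal (exp (1 / (4 * \<sigma>^2) * S a)) * indicator (space M) a \<partial>M)"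
    using \<open>\<sigma> > 0\<close> by (intro Chernoff_ineq_nn_integral_ge) auto
  also have "\<dots> = ennreal (exp (- (n + t))) * ennreal (sqrt 2 ^ CARD('i))"
    using nn_integral_gaussian_vector_exp_sum_squares[OF assms(1), where 'i='i] assms
    by (simp add: S_def M_def)
  also have "\<dots> \<le> ennreal (exp (- t))"
  proof -
    have "sqrt 2 \<le> 1 + 1"
      by (rule real_le_lsqrt) auto
    also have "\<dots> \<le> exp 1"
      by (rule exp_ge_add_one_self)
    finally have "sqrt 2 ^ CARD('i) \<le> exp 1 ^ CARD('i)"
      by (rule power_mono) simp
    also have "\<dots> = exp n"
      by (simp add: n_def flip: exp_of_nat_mult)
    finally have "exp (- (n + t)) * sqrt 2 ^ CARD('i) \<le> exp (- (n + t)) * exp n"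
      by (rule mult_left_mono) simp
    also have "\<dots> = exp (- t)"
      by (simp flip: exp_add)
    finally show ?thesis
      by (simp add: ennreal_leI flip: ennreal_mult)
  qed
  finally show ?thesis
    by (simp add: n_def emeasure_eq_measure)
qed

lemma sets_gauss_matrix_law: "sets (gauss_matrix_law \<sigma>) = sets borel"
proof -
  have "sets (gauss_matrix_law \<sigma> :: (('m::finite \<times> 'd::finite) \<Rightarrow> real) measure)
      = sets (PiM UNIV (\<lambda>_. borel))"
    unfolding gauss_matrix_law_def by (rule sets_PiM_cong) auto
  also have "\<dots> = sets borel"
    by (rule sets_PiM_equal_borel)
  finally show ?thesis .
qed

lemma space_gauss_matrix_law [simp]: "space (gauss_matrix_law \<sigma>) = UNIV"
  by (simp add: gauss_matrix_law_def space_PiM)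

theorem lemmaD3:
  fixes \<sigma>A :: real and b :: "real^'m::finite" and \<delta> :: real
  assumes "\<sigma>A > 0" and "0 < \<delta>" and "\<delta> < 1"
  shows "measure (gauss_matrix_law \<sigma>A :: (('m \<times> 'd::finite) \<Rightarrow> real) measure)
           {a \<in> space (gauss_matrix_law \<sigma>A).
              GS2 (relu_layer (to_matrix a) b)
                \<le> 2 * \<sigma>A * (sqrt (real (CARD('m) * CARD('d))) + sqrt (ln (1 / \<delta>)))}
         \<ge> 1 - \<delta>"
proof -
  define M where "M = (gauss_matrix_law \<sigma>A :: (('m \<times> 'd) \<Rightarrow> real) measure)"
  define R where "R = 2 * \<sigma>A * (sqrt (real (CARD('m) * CARD('d))) + sqrt (ln (1 / \<delta>)))"
  define G where "G = {a \<in> space M. GS2 (relu_layer (to_matrix a) b) \<le> R}"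
  interpret prob_space M
    unfolding M_def gauss_matrix_law_def
    by (intro prob_space_PiM prob_space_gaussian \<open>\<sigma>A > 0\<close>)
  have "G \<in> sets M"
    using borel_closed[OF closed_GS2_relu_layer_le]
    by (simp add: G_def M_def sets_gauss_matrix_law)
  have tail_sets: "{a \<in> space M. R \<le> L2_set a UNIV} \<in> sets M"
    unfolding M_def gauss_matrix_law_def L2_set_def by measurable
  have "space M - G \<subseteq> {a \<in> space M. R \<le> L2_set a UNIV}"
  proof
    fix a assume "a \<in> space M - G"
    then have "R < GS2 (relu_layer (to_matrix a) b)"
      by (auto simp: G_def)
    also have "\<dots> \<le> L2_set a UNIV"
      using GS2_le_lipschitz_const[OF relu_layer_lipschitz] by (simp flip: norm_to_matrix)
    finally show "a \<in> {a \<in> space M. R \<le> L2_set a UNIV}"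
      using \<open>a \<in> space M - G\<close> by simp
  qed
  then have "prob (space M - G) \<le> prob {a \<in> space M. R \<le> L2_set a UNIV}"
    using tail_sets by (rule finite_measure_mono)
  also have "\<dots> \<le> exp (- ln (1 / \<delta>))"
    using gaussian_vector_L2_set_tail[of \<sigma>A "ln (1 / \<delta>)", where 'i="'m \<times> 'd"] assms
    by (simp add: M_def R_def gauss_matrix_law_def)
  also have "\<dots> = \<delta>"
    using assms by (simp add: ln_div exp_minus)
  finally show ?thesis
    using prob_compl[OF \<open>G \<in> sets M\<close>] by (simp add: G_def M_def R_def)
qed

end
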